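(* Let $n,r\ge 1$, ${\bf A}\in\mathbb{H}^n$, $g\in\mathcal{G}$, and ${\bf X}_0\in\mathbb{C}^{n\times r}$. Put ${\bf W}_0={\bf X}_0^{\mathrm H}{\bf A}{\bf X}_0$ and ${\bf G}=\nabla g({\bf W}_0)\in\mathbb{H}^r$. Define ${\bf L}({\bf X})$ by $${\bf L}({\bf X})={\bf X}^{\mathrm H}{\bf A}^{(-)}{\bf X}+{\bf X}^{\mathrm H}{\bf A}^{(+)}{\bf X}_0+{\bf X}_0^{\mathrm H}{\bf A}^{(+)}{\bf X}-{\bf X}_0^{\mathrm H}{\bf A}^{(+)}{\bf X}_0\quad\text{if } g \text{ is MND},$$ $${\bf L}({\bf X})={\bf X}^{\mathrm H}{\bf A}^{(+)}{\bf X}+{\bf X}^{\mathrm H}{\bf A}^{(-)}{\bf X}_0+{\bf X}_0^{\mathrm H}{\bf A}^{(-)}{\bf X}-{\bf X}_0^{\mathrm H}{\bf A}^{(-)}{\bf X}_0\quad\text{if } g \text{ is MNI},$$ and $$l({\bf X};{\bf X}_0)=\mathrm{tr}\big({\bf L}({\bf X})^{\mathrm H}{\bf G}\big)+g({\bf W}_0)-\mathrm{tr}({\bf W}_0{\bf G}),\qquad {\bf X}\in\mathbb{C}^{n\times r}.$$ Then: (i) $l(\cdot;{\bf X}_0)$ is a real-valued concave function on $\mathbb{C}^{n\times r}$ (viewed as a real vector space); (ii) $l({\bf X};{\bf X}_0)\le g({\bf X}^{\mathrm H}{\bf A}{\bf X})$ for all ${\bf X}\in\mathbb{C}^{n\times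 r}$; (iii) $l({\bf X}_0;{\bf X}_0)=g({\bf X}_0^{\mathrm H}{\bf A}{\bf X}_0)$; (iv) the functions ${\bf X}\mapsto l({\bf X};{\bf X}_0)$ and ${\bf X}\mapsto g({\bf X}^{\mathrm H}{\bf A}{\bf X})$ have the same (real Fréchet) derivative at ${\bf X}={\bf X}_0$.
   Context: $\mathbb{H}^m$ denotes the real vector space of $m\times m$ complex Hermitian matrices, with inner product $\langle{\bf U},{\bf V}\rangle=\mathrm{tr}({\bf U}{\bf V})$; ${\bf U}\succeq{\bf V}$ means ${\bf U}-{\bf V}$ is positive semidefinite. For ${\bf A}\in\mathbb{H}^n$ with eigen-decomposition ${\bf A}=\sum_i\lambda_i{\bf u}_i{\bf u}_i^{\mathrm H}$ (orthonormal ${\bf u}_i$), ${\bf A}^{(+)}=\sum_{\lambda_i>0}\lambda_i{\bf u}_i{\bf u}_i^{\mathrm H}$ and ${\bf A}^{(-)}=\sum_{\lambda_i<0}\lambda_i{\bf u}_i{\bf u}_i^{\mathrm H}$, so ${\bf A}={\bf A}^{(+)}+{\bf A}^{(-)}$. A function $g:\mathbb{H}^r\to\mathbb{R}$ is MND (matrix nondecreasing) if ${\bf W}_1\succeq{\bf W}_2\Rightarrow g({\bf W}_1)\ge g({\bf W}_2)$, and MNI (matrix nonincreasing) if ${\bf W}_1\succeq{\bf W}_2\Rightarrow g({\bf W}_1)\le g({\bf W}_2)$. $\mathcal{G}$ is the family of differentiable convex functions $g:\mathbb{H}^r\to\mathbb{R}$ that are MND or MNI. For differentiable $g$, $\nabla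 g({\bf W}_0)\in\mathbb{H}^r$ denotes its gradient with respect to the inner product above, i.e. $g({\bf W}_0+\Delta)=g({\bf W}_0)+\mathrm{tr}(\nabla g({\bf W}_0)\Delta)+o(\|\Delta\|)$ for $\Delta\in\mathbb{H}^r$. *)

theory Defs
  imports "HOL-Analysis.Analysis"
begin

text \<open>Complex matrices with m rows and k columns are modelled as complex^'k^'m
  (rows indexed by 'm, columns by 'k); this is a real Euclidean space.\<close>

definition ctrans :: "complex^'k^'m \<Rightarrow> complex^'m^'k" where
  "ctrans X = (\<chi> i j. cnj (X $ j $ i))"

definition hermitian :: "complex^'m^'m \<Rightarrow> bool" where
  "hermitian M \<longleftrightarrow> ctrans M = M"

definition herm_set :: "(complex^'m^'m) set" where
  "herm_set = {M. hermitian M}"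

definition cinner :: "complex^'m \<Rightarrow> complex^'m \<Rightarrow> complex" where
  "cinner u v = (\<Sum>k\<in>UNIV. cnj (u $ k) * v $ k)"

definition psd :: "complex^'m^'m \<Rightarrow> bool" where
  "psd M \<longleftrightarrow> hermitian M \<and> (\<forall>x. 0 \<le> Re (cinner x (M *v x)))"

definition outer :: "complex^'m \<Rightarrow> complex^'m^'m" where
  "outer u = (\<chi> a b. u $ a * cnj (u $ b))"

definition eigen_decomp :: "complex^'n^'n \<Rightarrow> ('n \<Rightarrow> real) \<Rightarrow> ('n \<Rightarrow> complex^'n) \<Rightarrow> bool" where
  "eigen_decomp A lam u \<longleftrightarrow>
     (\<forall>i j. cinner (u i) (u j) = (if i = j then 1 else 0)) \<and>
     A = (\<Sum>i\<in>UNIV. lam i *\<^sub>R outer (u i))"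

definition pos_part :: "complex^'n^'n \<Rightarrow> complex^'n^'n" where
  "pos_part A = (SOME P. \<exists>lam u. eigen_decomp A lam u \<and>
       P = (\<Sum>i\<in>{i. lam i > 0}. lam i *\<^sub>R outer (u i)))"

definition neg_part :: "complex^'n^'n \<Rightarrow> complex^'n^'n" where
  "neg_part A = (SOME P. \<exists>lam u. eigen_decomp A lam u \<and>
       P = (\<Sum>i\<in>{i. lam i < 0}. lam i *\<^sub>R outer (u i)))"

definition MND :: "(complex^'r^'r \<Rightarrow> real) \<Rightarrow> bool" where
  "MND g \<longleftrightarrow> (\<forall>W1 W2. hermitian W1 \<and> hermitian W2 \<and> psd (W1 - W2) \<longrightarrow> g W1 \<ge> g W2)"

definition MNI :: "(complex^'r^'r \<Rightarrow> real) \<Rightarrow> bool" where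
  "MNI g \<longleftrightarrow> (\<forall>W1 W2. hermitian W1 \<and> hermitian W2 \<and> psd (W1 - W2) \<longrightarrow> g W1 \<le> g W2)"

definition is_gradient :: "(complex^'r^'r \<Rightarrow> real) \<Rightarrow> complex^'r^'r \<Rightarrow> complex^'r^'r \<Rightarrow> bool" where
  "is_gradient g W G \<longleftrightarrow> hermitian G \<and>
     (g has_derivative (\<lambda>D. Re (trace (G ** D)))) (at W within herm_set)"

definition grad :: "(complex^'r^'r \<Rightarrow> real) \<Rightarrow> complex^'r^'r \<Rightarrow> complex^'r^'r" where
  "grad g W = (SOME G. is_gradient g W G)"

definition in_G :: "(complex^'r^'r \<Rightarrow> real) \<Rightarrow> bool" where
  "in_G g \<longleftrightarrow> convex_on herm_set g \<and> (\<forall>W\<in>herm_set. \<exists>G. is_gradient g W G)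
      \<and> (MND g \<or> MNI g)"

definition Lmat :: "bool \<Rightarrow> complex^'n^'n \<Rightarrow> complex^'r^'n \<Rightarrow> complex^'r^'n \<Rightarrow> complex^'r^'r" where
  "Lmat mnd A X0 X =
     (let P = (if mnd then neg_part A else pos_part A);
          Q = (if mnd then pos_part A else neg_part A)
      in ctrans X ** P ** X + ctrans X ** Q ** X0 + ctrans X0 ** Q ** X - ctrans X0 ** Q ** X0)"

definition lfun :: "bool \<Rightarrow> (complex^'r^'r \<Rightarrow> real) \<Rightarrow> complex^'n^'n \<Rightarrow> complex^'r^'n \<Rightarrow> complex^'r^'n \<Rightarrow> complex" where
  "lfun mnd g A X0 X =
     (let W0 = ctrans X0 ** A ** X0; G = grad g W0
      in trace (ctrans (Lmat mnd A X0 X) ** G) + of_real (g W0) - trace (W0 ** G))"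

end

theory Submission
  imports Defs
begin

text \<open>Write \<open>A = R + Q\<close> with \<open>Q\<close> the spectral part of \<open>A\<close> along which \<open>g\<close> increases
  (\<open>A\<^sup>+\<close> for MND, \<open>A\<^sup>-\<close> for MNI) and \<open>R\<close> the other one. Then
  \<open>X\<^sup>H A X = L(X) + (X - X\<^sub>0)\<^sup>H Q (X - X\<^sub>0)\<close>, so \<open>g(L(X)) \<le> g(X\<^sup>H A X)\<close>, and \<open>l(X)\<close> is the
  tangent plane of the convex \<open>g\<close> at \<open>W\<^sub>0 = L(X\<^sub>0)\<close> evaluated at \<open>L(X)\<close>; hence
  \<open>l(X) \<le> g(L(X)) \<le> g(X\<^sup>H A X)\<close> with equality at \<open>X\<^sub>0\<close>. The quadratic part of \<open>l\<close> is
  \<open>X \<mapsto> tr(G X\<^sup>H R X)\<close>, which is nonpositive because \<open>g\<close> decreases in every direction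
  \<open>D\<^sup>H R D\<close>; so \<open>l\<close> is concave. A differentiable minorant touching a differentiable
  function at a point has the same derivative there.\<close>

section \<open>Complex inner product and conjugate transpose\<close>

(* Specialised to complex so that simp does not also rewrite scalings of vectors. *)
lemma scaleR_complex: "r *\<^sub>R (z::complex) = of_real r * z"
  by (rule scaleR_conv_of_real)

lemma cinner_zero_right [simp]: "cinner u 0 = 0"
  unfolding cinner_def by simp

lemma cinner_add_right: "cinner u (v + w) = cinner u v + cinner u w"
  unfolding cinner_def by (simp add: distrib_left sum.distrib)

lemma cinner_add_left: "cinner (u + v) w = cinner u w + cinner v w"
  unfolding cinner_def by (simp add: distrib_right sum.distrib)

lemma cinner_diff_right: "cinner u (v - w) = cinner u v - cinner u w"
  unfolding cinner_def by (simp add: right_diff_distrib sum_subtractf)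

lemma cinner_scaleR_right: "cinner u (r *\<^sub>R v) = of_real r * cinner u v"
  unfolding cinner_def by (simp add: sum_distrib_left scaleR_complex mult_ac)

lemma cinner_scaleR_left: "cinner (r *\<^sub>R u) v = of_real r * cinner u v"
  unfolding cinner_def by (simp add: sum_distrib_left scaleR_complex mult_ac)

lemma cinner_smult_right: "cinner u (c *s v) = c * cinner u v"
  unfolding cinner_def by (simp add: sum_distrib_left mult_ac)

lemma cinner_smult_left: "cinner (c *s u) v = cnj c * cinner u v"
  unfolding cinner_def by (simp add: sum_distrib_left mult_ac)

lemma cinner_sum_right: "finite S \<Longrightarrow> cinner u (sum f S) = (\<Sum>i\<in>S. cinner u (f i))"
  by (induction S rule: finite_induct) (simp_all add: cinner_add_right)

lemma cinner_commute_cnj: "cnj (cinner u v) = cinner v u"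
  unfolding cinner_def by (simp add: mult.commute)

lemma cinner_eq_zero_sym: "cinner s z = 0 \<Longrightarrow> cinner z s = 0"
  by (metis cinner_commute_cnj complex_cnj_zero)

lemma Re_cinner: "Re (cinner u v) = u \<bullet> v"
  unfolding cinner_def inner_vec_def by (simp add: inner_complex_def)

lemma cinner_self: "cinner u u = of_real ((norm u)\<^sup>2)"
  by (rule complex_eqI)
    (simp_all add: Re_cinner power2_norm_eq_inner, simp add: cinner_def mult.commute)

lemma cinner_matrix_vector: "cinner u (M *v v) = cinner (ctrans M *v u) v"
proof -
  have "cinner u (M *v v) = (\<Sum>k\<in>UNIV. \<Sum>j\<in>UNIV. cnj (u $ k) * M $ k $ j * v $ j)"
    unfolding cinner_def matrix_vector_mult_def by (simp add: sum_distrib_left mult_ac)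
  also have "\<dots> = (\<Sum>j\<in>UNIV. \<Sum>k\<in>UNIV. cnj (u $ k) * M $ k $ j * v $ j)"
    by (rule sum.swap)
  also have "\<dots> = cinner (ctrans M *v u) v"
    unfolding cinner_def matrix_vector_mult_def ctrans_def
    by (simp add: sum_distrib_left sum_distrib_right mult_ac)
  finally show ?thesis .
qed

lemma hermitian_cinner_sym: "hermitian A \<Longrightarrow> cinner u (A *v v) = cinner (A *v u) v"
  unfolding hermitian_def by (simp add: cinner_matrix_vector)

lemma ctrans_ctrans [simp]: "ctrans (ctrans X) = X"
  unfolding ctrans_def by (simp add: vec_eq_iff)

lemma ctrans_mult: "ctrans (A ** B) = ctrans B ** ctrans A"
  unfolding ctrans_def matrix_matrix_mult_def by (simp add: vec_eq_iff mult.commute)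

lemma ctrans_add: "ctrans (A + B) = ctrans A + ctrans B"
  unfolding ctrans_def by (simp add: vec_eq_iff)

lemma ctrans_diff: "ctrans (A - B) = ctrans A - ctrans B"
  unfolding ctrans_def by (simp add: vec_eq_iff)

lemma ctrans_uminus: "ctrans (- A) = - ctrans A"
  unfolding ctrans_def by (simp add: vec_eq_iff)

lemma ctrans_scaleR: "ctrans (r *\<^sub>R A) = r *\<^sub>R ctrans A"
  unfolding ctrans_def by (simp add: vec_eq_iff scaleR_complex)

lemma ctrans_sum: "finite S \<Longrightarrow> ctrans (sum f S) = (\<Sum>i\<in>S. ctrans (f i))"
  by (induction S rule: finite_induct) (simp_all add: ctrans_add ctrans_def vec_eq_iff)

lemma trace_ctrans: "trace (ctrans A) = cnj (trace A)"
  unfolding trace_def ctrans_def by simp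

lemma trace_scaleR: "trace (r *\<^sub>R (A::complex^'n^'n)) = r *\<^sub>R trace A"
  unfolding trace_def by (simp add: scaleR_sum_right)

lemma matrix_diff_ldistrib: "(A::'a::ring_1^'n^'m) ** (B - C) = A ** B - A ** C"
  by (vector matrix_matrix_mult_def sum_subtractf[symmetric] right_diff_distrib)

lemma matrix_add_rdistrib: "((B::'a::semiring_1^'n^'m) + C) ** A = B ** A + C ** A"
  by (vector matrix_matrix_mult_def sum.distrib[symmetric] distrib_right)

lemma matrix_uminus_left: "(- (B::'a::ring_1^'n^'m)) ** A = - (B ** A)"
  by (vector matrix_matrix_mult_def sum_negf[symmetric])

lemma matrix_uminus_right: "(A::'a::ring_1^'n^'m) ** (- B) = - (A ** B)"
  by (vector matrix_matrix_mult_def sum_negf[symmetric])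

lemma matrix_vector_mult_sum: "finite S \<Longrightarrow> (sum f S) *v x = (\<Sum>i\<in>S. f i *v x)"
  by (induction S rule: finite_induct) (simp_all add: matrix_vector_mult_add_rdistrib)

lemma matrix_vector_mult_sum_right:
  "finite S \<Longrightarrow> (M::complex^'n^'m) *v (sum f S) = (\<Sum>i\<in>S. M *v f i)"
  by (induction S rule: finite_induct) (simp_all add: matrix_vector_right_distrib)

lemma scaleR_matrix_vector_mult: "(r *\<^sub>R (M::complex^'n^'m)) *v x = r *\<^sub>R (M *v x)"
  unfolding matrix_vector_mult_def by (simp add: vec_eq_iff scaleR_sum_right)

lemma matrix_vector_mult_scaleR_right: "(M::complex^'n^'m) *v (r *\<^sub>R x) = r *\<^sub>R (M *v x)"
  unfolding matrix_vector_mult_def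
  by (simp add: vec_eq_iff scaleR_sum_right scaleR_complex sum_distrib_left mult_ac)

lemma matrix_vector_mult_smult_right: "(M::complex^'n^'m) *v (c *s x) = c *s (M *v x)"
  unfolding matrix_vector_mult_def by (simp add: vec_eq_iff sum_distrib_left mult_ac)

lemma outer_matrix_vector: "outer u *v x = cinner u x *s u"
  unfolding outer_def matrix_vector_mult_def cinner_def by (simp add: vec_eq_iff sum_distrib_left mult_ac)

section \<open>Hermitian and positive semidefinite matrices\<close>

definition sesq :: "complex^'n^'n \<Rightarrow> complex^'r^'n \<Rightarrow> complex^'r^'n \<Rightarrow> complex^'r^'r" where
  "sesq M X Y = ctrans X ** M ** Y"

lemma bilinear_sesq: "bilinear (sesq M)"
  unfolding bilinear_def
proof (intro conjI allI)
  fix X Y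
  show "linear (sesq M X)"
    by (rule linearI) (simp_all add: sesq_def matrix_add_ldistrib matrix_scalar_ac scalar_matrix_assoc)
  show "linear (\<lambda>X. sesq M X Y)"
    by (rule linearI)
      (simp_all add: sesq_def ctrans_add ctrans_scaleR matrix_add_rdistrib scalar_matrix_assoc)
qed

lemma sesq_add_matrix: "sesq (M + N) X Y = sesq M X Y + sesq N X Y"
  unfolding sesq_def by (simp add: matrix_add_ldistrib matrix_add_rdistrib)

lemma sesq_uminus_matrix: "sesq (- M) X Y = - sesq M X Y"
  unfolding sesq_def by (simp add: matrix_uminus_left matrix_uminus_right)

lemma hermitian_add: "hermitian A \<Longrightarrow> hermitian B \<Longrightarrow> hermitian (A + B)"
  unfolding hermitian_def by (simp add: ctrans_add)

lemma hermitian_diff: "hermitian A \<Longrightarrow> hermitian B \<Longrightarrow> hermitian (A - B)"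
  unfolding hermitian_def by (simp add: ctrans_diff)

lemma hermitian_uminus_iff: "hermitian (- A) \<longleftrightarrow> hermitian A"
  unfolding hermitian_def by (metis ctrans_uminus minus_minus)

lemma hermitian_scaleR: "hermitian A \<Longrightarrow> hermitian (r *\<^sub>R A)"
  unfolding hermitian_def by (simp add: ctrans_scaleR)

lemma hermitian_sum: "finite S \<Longrightarrow> (\<And>i. i \<in> S \<Longrightarrow> hermitian (f i)) \<Longrightarrow> hermitian (sum f S)"
  unfolding hermitian_def by (simp add: ctrans_sum)

lemma hermitian_outer: "hermitian (outer u)"
  unfolding hermitian_def outer_def ctrans_def by (simp add: vec_eq_iff mult.commute)

lemma hermitian_sesq: "hermitian M \<Longrightarrow> hermitian (sesq M X X)"
  unfolding hermitian_def sesq_def by (simp add: ctrans_mult matrix_mul_assoc)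

lemma hermitian_sesq_sym: "hermitian M \<Longrightarrow> hermitian (sesq M X Y + sesq M Y X)"
  unfolding hermitian_def sesq_def by (simp add: ctrans_mult ctrans_add matrix_mul_assoc add.commute)

lemma Im_trace_hermitian_mult:
  assumes "hermitian M" "hermitian G"
  shows "Im (trace (M ** G)) = 0"
proof -
  have "cnj (trace (M ** G)) = trace (M ** G)"
    using assms unfolding hermitian_def by (metis trace_ctrans ctrans_mult trace_mul_sym)
  then show ?thesis by (metis Reals_cnj_iff complex_is_Real_iff)
qed

lemma psd_sesq:
  assumes "psd P" shows "psd (sesq P X X)"
proof -
  have "hermitian P" using assms unfolding psd_def by auto
  moreover have "cinner x (sesq P X X *v x) = cinner (X *v x) (P *v (X *v x))" for x
    by (simp add: sesq_def matrix_vector_mul_assoc[symmetric] cinner_matrix_vector)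
  ultimately show ?thesis using assms unfolding psd_def by (simp add: hermitian_sesq)
qed

lemma Re_cinner_outer_nonneg: "0 \<le> Re (cinner x (outer u *v x))"
proof -
  have "cinner x (outer u *v x) = cnj (cinner u x) * cinner u x"
    by (simp add: outer_matrix_vector cinner_smult_right cinner_commute_cnj mult.commute)
  then show ?thesis by (simp add: mult.commute complex_mult_cnj[of "cinner u x"])
qed

lemma psd_outer_sum:
  assumes "finite S" "\<And>i. i \<in> S \<Longrightarrow> 0 \<le> c i"
  shows "psd (\<Sum>i\<in>S. c i *\<^sub>R outer (u i))"
  unfolding psd_def
proof (intro conjI allI)
  show "hermitian (\<Sum>i\<in>S. c i *\<^sub>R outer (u i))"
    using assms by (intro hermitian_sum hermitian_scaleR hermitian_outer)
  fix x
  have "Re (cinner x ((\<Sum>i\<in>S. c i *\<^sub>R outer (u i)) *v x))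
      = (\<Sum>i\<in>S. c i * Re (cinner x (outer (u i) *v x)))"
    using assms by (simp add: matrix_vector_mult_sum cinner_sum_right scaleR_matrix_vector_mult
        cinner_scaleR_right Re_sum)
  also have "\<dots> \<ge> 0"
    using assms by (intro sum_nonneg mult_nonneg_nonneg Re_cinner_outer_nonneg) auto
  finally show "0 \<le> Re (cinner x ((\<Sum>i\<in>S. c i *\<^sub>R outer (u i)) *v x))" .
qed

section \<open>The spectral theorem for Hermitian matrices\<close>

definition corthonormal :: "(complex^'n) set \<Rightarrow> bool" where
  "corthonormal S \<longleftrightarrow> (\<forall>s\<in>S. cinner s s = 1) \<and> (\<forall>s\<in>S. \<forall>t\<in>S. s \<noteq> t \<longrightarrow> cinner s t = 0)"

text \<open>Counting dimensions over \<open>\<real>\<close>: the vectors \<open>s\<close> and \<open>\<i> s\<close> for \<open>s \<in> S\<close> are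
  orthonormal for the real inner product \<open>Re (cinner _ _)\<close>.\<close>

lemma corthonormal_realified:
  fixes S :: "(complex^'n) set"
  assumes "corthonormal S"
  defines "T \<equiv> (\<lambda>(c, s). c *s s) ` ({1, \<i>} \<times> S)"
  shows "independent T" and "finite S" and "card T = 2 * card S"
proof -
  have S1: "\<And>s. s \<in> S \<Longrightarrow> cinner s s = 1"
    and S0: "\<And>s t. s \<in> S \<Longrightarrow> t \<in> S \<Longrightarrow> s \<noteq> t \<Longrightarrow> cinner s t = 0"
    using assms unfolding corthonormal_def by auto
  have scaled: "cinner (c *s s) (d *s t) = cnj c * d * cinner s t" for c d s t
    by (simp add: cinner_smult_left cinner_smult_right)
  have inj: "inj_on (\<lambda>(c, s). c *s s) ({1, \<i>} \<times> S)"
  proof (rule inj_onI, clarify)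
    fix c s d t
    assume c: "c \<in> {1, \<i>}" and s: "s \<in> S" and d: "d \<in> {1, \<i>}" and t: "t \<in> S"
      and eq: "c *s s = d *s t"
    have "c = d * cinner s t"
      using arg_cong[OF eq, of "cinner s"] S1[OF s] by (simp add: cinner_smult_right)
    then show "c = d \<and> s = t"
      using c d S0[OF s t] S1[OF s] by (cases "s = t") auto
  qed
  have unit: "cinner (c *s s) (c *s s) = 1" if "c \<in> {1, \<i>}" "s \<in> S" for c s
    using that S1 by (auto simp: scaled)
  have T_elem: "\<exists>c s. c \<in> {1, \<i>} \<and> s \<in> S \<and> x = c *s s" if "x \<in> T" for x
    using that unfolding T_def by auto
  have "pairwise orthogonal T"
  proof (rule pairwiseI)
    fix x y assume "x \<in> T" "y \<in> T" "x \<noteq> y"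
    then obtain c d s t where c: "c \<in> {1, \<i>}" and d: "d \<in> {1, \<i>}" and st: "s \<in> S" "t \<in> S"
      and xy: "x = c *s s" "y = d *s t"
      using T_elem by metis
    have "Re (cinner (c *s s) (d *s t)) = 0"
    proof (cases "s = t")
      case True
      then have "c \<noteq> d" using \<open>x \<noteq> y\<close> xy by auto
      then show ?thesis using c d S1[OF st(1)] True by (auto simp: scaled)
    qed (simp add: scaled S0 st)
    then show "orthogonal x y" unfolding orthogonal_def xy Re_cinner .
  qed
  moreover have "0 \<notin> T"
    using T_elem unit by fastforce
  ultimately show ind: "independent T" using pairwise_orthogonal_independent by blast
  have "finite T" using independent_bound[OF ind] by blast
  then have "finite ({1, \<i>} \<times> S)" unfolding T_def using finite_image_iff[OF inj] by simp
  then show finS: "finite S" using finite_cartesian_productD2[of "{1, \<i>}" S] by blast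
  have "card {1, \<i>::complex} = 2" by simp
  then show "card T = 2 * card S"
    unfolding T_def card_image[OF inj] card_cartesian_product by simp
qed

lemma corthonormal_card:
  fixes S :: "(complex^'n) set"
  assumes "corthonormal S"
  shows "finite S" and "card S \<le> CARD('n)"
proof -
  let ?T = "(\<lambda>(c, s). c *s s) ` ({1, \<i>} \<times> S)"
  show "finite S" using corthonormal_realified[OF assms] by simp
  have "card ?T \<le> DIM(complex^'n)"
    using independent_bound[OF corthonormal_realified(1)[OF assms]] by simp
  then show "card S \<le> CARD('n)" using corthonormal_realified(3)[OF assms] by simp
qed

lemma corthonormal_complement_nonzero:
  fixes S :: "(complex^'n) set"
  assumes "corthonormal S" "card S < CARD('n)"
  obtains y where "y \<noteq> 0" "\<And>s. s \<in> S \<Longrightarrow> cinner s y = 0"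
proof -
  let ?T = "(\<lambda>(c, s). c *s s) ` ({1, \<i>} \<times> S)"
  have "finite ?T"
    using corthonormal_realified(2)[OF assms(1)] by simp
  then have "dim ?T < DIM(complex^'n)"
    using corthonormal_realified(3)[OF assms(1)] assms(2) dim_le_card'[of ?T] by simp
  then obtain y where y: "y \<noteq> 0" "\<And>x. x \<in> span ?T \<Longrightarrow> orthogonal y x"
    using orthogonal_to_subspace_exists[of ?T] by blast
  have "cinner s y = 0" if "s \<in> S" for s
  proof -
    have "orthogonal y s" "orthogonal y (\<i> *s s)"
      using y(2) that by (force intro: span_base)+
    then have "Re (cinner s y) = 0" "Re (cinner (\<i> *s s) y) = 0"
      by (auto simp: Re_cinner orthogonal_def inner_commute)
    then show ?thesis by (simp add: cinner_smult_left complex_eq_iff)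
  qed
  with y(1) show ?thesis using that by blast
qed

lemma corthonormal_cinner_sum:
  assumes "corthonormal S" "finite S" "t \<in> S"
  shows "cinner t (\<Sum>s\<in>S. c s *s s) = c t"
proof -
  have "cinner t (\<Sum>s\<in>S. c s *s s) = (\<Sum>s\<in>S. c s * cinner t s)"
    using assms by (simp add: cinner_sum_right cinner_smult_right)
  also have "\<dots> = c t * cinner t t + (\<Sum>s\<in>S - {t}. c s * cinner t s)"
    using assms by (simp add: sum.remove)
  also have "(\<Sum>s\<in>S - {t}. c s * cinner t s) = 0"
    using assms unfolding corthonormal_def by (intro sum.neutral) auto
  finally show ?thesis using assms unfolding corthonormal_def by simp
qed

lemma corthonormal_expansion:
  assumes S: "corthonormal (S::(complex^'n) set)" and card: "card S = CARD('n)"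
  shows "x = (\<Sum>s\<in>S. cinner s x *s s)"
proof (rule ccontr)
  assume ne: "x \<noteq> (\<Sum>s\<in>S. cinner s x *s s)"
  have finS: "finite S" using corthonormal_card[OF S] by simp
  define y where "y = x - (\<Sum>s\<in>S. cinner s x *s s)"
  have y0: "y \<noteq> 0" using ne unfolding y_def by simp
  define z where "z = (1 / norm y) *\<^sub>R y"
  have zz: "cinner z z = 1" using y0 unfolding z_def by (simp add: cinner_self)
  have zS: "cinner t z = 0" if "t \<in> S" for t
    using corthonormal_cinner_sum[OF S finS that]
    unfolding z_def y_def by (simp add: cinner_scaleR_right cinner_diff_right)
  have "z \<notin> S" using zS zz by force
  moreover have "corthonormal (insert z S)"
    using S zz zS unfolding corthonormal_def by (auto intro: cinner_eq_zero_sym)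
  ultimately show False
    using corthonormal_card(2)[of "insert z S"] finS card by simp
qed

lemma linear_coeff_nonpos_if_quadratic_nonpos:
  fixes a c :: real
  assumes nonpos: "\<And>t. t * a + t\<^sup>2 * c \<le> 0"
  shows "a \<le> 0"
proof (rule ccontr)
  assume "\<not> a \<le> 0"
  define t where "t = a / (\<bar>c\<bar> + 1)"
  have "t > 0" using \<open>\<not> a \<le> 0\<close> unfolding t_def by simp
  have "t * \<bar>c\<bar> < a"
    using \<open>\<not> a \<le> 0\<close> unfolding t_def by (simp add: field_simps)
  then have "t * (t * \<bar>c\<bar>) < t * a" using \<open>t > 0\<close> by simp
  moreover have "- (t * (t * \<bar>c\<bar>)) \<le> t\<^sup>2 * c"
    using mult_left_mono[of "- \<bar>c\<bar>" c "t\<^sup>2"]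
    by (simp add: power2_eq_square mult.assoc abs_ge_minus_self)
  ultimately show False using nonpos[of t] by linarith
qed

lemma hermitian_cinner_self_real:
  assumes "hermitian A"
  shows "cinner v (A *v v) = of_real (Re (cinner v (A *v v)))"
proof -
  have "cnj (cinner v (A *v v)) = cinner v (A *v v)"
    by (simp add: cinner_commute_cnj hermitian_cinner_sym[OF assms])
  then have "Im (cinner v (A *v v)) = 0" by (metis Reals_cnj_iff complex_is_Real_iff)
  then show ?thesis by (simp add: complex_eq_iff)
qed

text \<open>Perturbing \<open>v\<close> by \<open>t w\<close> with \<open>w = A v - \<lambda> v\<close> changes the
  Rayleigh quotient to first order by \<open>2 t |w|\<^sup>2\<close>, so \<open>w = 0\<close>.\<close>

lemma hermitian_max_rayleigh_eigenvector:
  fixes A :: "complex^'n^'n"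
  defines "q \<equiv> \<lambda>x. Re (cinner x (A *v x))"
  assumes herm: "hermitian A" and V: "subspace V" and inv: "\<And>x. x \<in> V \<Longrightarrow> A *v x \<in> V"
    and v: "v \<in> V" "norm v = 1" and max: "\<And>x. x \<in> V \<Longrightarrow> norm x = 1 \<Longrightarrow> q x \<le> q v"
  shows "A *v v = q v *\<^sub>R v"
proof -
  define lam where "lam = q v"
  define w where "w = A *v v - lam *\<^sub>R v"
  have vv: "cinner v v = 1" using v(2) by (simp add: cinner_self)
  have vAv: "cinner v (A *v v) = of_real lam"
    unfolding lam_def q_def by (rule hermitian_cinner_self_real[OF herm])
  have wV: "w \<in> V" unfolding w_def using V inv v by (simp add: subspace_diff subspace_scale)
  have vw: "cinner v w = 0"
    unfolding w_def by (simp add: cinner_diff_right cinner_scaleR_right vAv vv)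
  have wv: "cinner w v = 0" using cinner_eq_zero_sym[OF vw] .
  have Av: "A *v v = w + lam *\<^sub>R v" unfolding w_def by simp
  have vAw: "cinner v (A *v w) = cinner w w"
    by (subst hermitian_cinner_sym[OF herm]) (simp add: Av cinner_add_left cinner_scaleR_left vw)
  have wAv: "cinner w (A *v v) = cinner w w"
    by (simp add: Av cinner_add_right cinner_scaleR_right wv)
  have q_scale: "q (c *\<^sub>R z) = c\<^sup>2 * q z" for c z
    unfolding q_def
    by (simp add: matrix_vector_mult_scaleR_right cinner_scaleR_right cinner_scaleR_left power2_eq_square)
  have q_le: "q z \<le> lam * (norm z)\<^sup>2" if "z \<in> V" for z
  proof (cases "z = 0")
    case True then show ?thesis unfolding q_def by simp
  next
    case False
    have "q ((1 / norm z) *\<^sub>R z) \<le> lam"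
      using max[of "(1 / norm z) *\<^sub>R z"] that V False unfolding lam_def by (simp add: subspace_scale)
    then show ?thesis using False by (simp add: q_scale field_simps)
  qed
  define a where "a = Re (cinner w w)"
  have "t * (2 * a) + t\<^sup>2 * (q w - lam * a) \<le> 0" for t
  proof -
    have "q (v + t *\<^sub>R w) = lam + 2 * t * a + t\<^sup>2 * q w"
      unfolding q_def a_def
      by (simp add: matrix_vector_right_distrib matrix_vector_mult_scaleR_right cinner_add_left
          cinner_add_right cinner_scaleR_left cinner_scaleR_right vAv vAw wAv power2_eq_square
          algebra_simps)
    moreover have "(norm (v + t *\<^sub>R w))\<^sup>2 = 1 + t\<^sup>2 * a"
      using arg_cong[OF cinner_self[of "v + t *\<^sub>R w"], of Re] unfolding a_def
      by (simp add: cinner_add_left cinner_add_right cinner_scaleR_left cinner_scaleR_right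
          vv vw wv power2_eq_square)
    moreover have "v + t *\<^sub>R w \<in> V" using V v wV by (simp add: subspace_add subspace_scale)
    ultimately show ?thesis using q_le[of "v + t *\<^sub>R w"] by (simp add: algebra_simps)
  qed
  then have "2 * a \<le> 0" by (rule linear_coeff_nonpos_if_quadratic_nonpos)
  then have "w = 0" unfolding a_def by (simp add: cinner_self)
  then show ?thesis using Av unfolding lam_def by simp
qed

lemma hermitian_eigenvector_extend:
  fixes A :: "complex^'n^'n"
  assumes herm: "hermitian A" and S: "corthonormal S"
    and eig: "\<forall>s\<in>S. \<exists>l::real. A *v s = l *\<^sub>R s" and card: "card S < CARD('n)"
  obtains v where "v \<notin> S" "corthonormal (insert v S)" "\<exists>l::real. A *v v = l *\<^sub>R v"
proof -
  define V where "V = {x. \<forall>s\<in>S. cinner s x = 0}"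
  define q where "q x = Re (cinner x (A *v x))" for x
  have V: "subspace V"
    unfolding subspace_def V_def by (simp add: cinner_add_right cinner_scaleR_right)
  have inv: "A *v x \<in> V" if "x \<in> V" for x
  proof -
    have "cinner s (A *v x) = 0" if "s \<in> S" for s
      using eig that \<open>x \<in> V\<close> unfolding V_def
      by (auto simp: hermitian_cinner_sym[OF herm] cinner_scaleR_left)
    then show ?thesis unfolding V_def by simp
  qed
  have "closed V"
    unfolding V_def cinner_def Collect_ball_eq
    by (intro closed_INT closed_Collect_eq ballI continuous_intros)
  then have "compact (V \<inter> sphere 0 1)" by (intro closed_Int_compact compact_sphere)
  moreover obtain y where "y \<noteq> 0" "\<And>s. s \<in> S \<Longrightarrow> cinner s y = 0"
    using corthonormal_complement_nonzero[OF S card] by blast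
  then have "(1 / norm y) *\<^sub>R y \<in> V \<inter> sphere 0 1"
    unfolding V_def by (simp add: cinner_scaleR_right)
  moreover have "continuous_on (V \<inter> sphere 0 1) q"
    unfolding q_def cinner_def matrix_vector_mult_def by (intro continuous_intros)
  ultimately obtain v where v: "v \<in> V \<inter> sphere 0 1"
    and vmax: "\<And>x. x \<in> V \<inter> sphere 0 1 \<Longrightarrow> q x \<le> q v"
    using continuous_attains_sup[of "V \<inter> sphere 0 1" q] by blast
  have "A *v v = q v *\<^sub>R v"
    using v vmax unfolding q_def
    by (intro hermitian_max_rayleigh_eigenvector[OF herm V inv]) auto
  moreover have vv: "cinner v v = 1" using v by (simp add: cinner_self)
  moreover have "\<forall>s\<in>S. cinner s v = 0" using v unfolding V_def by auto
  ultimately show ?thesis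
    using that S unfolding corthonormal_def by (force intro: cinner_eq_zero_sym)
qed

lemma hermitian_eigenvectors_card:
  fixes A :: "complex^'n^'n"
  assumes herm: "hermitian A"
  shows "k \<le> CARD('n) \<Longrightarrow> \<exists>S. corthonormal S \<and> card S = k \<and> (\<forall>s\<in>S. \<exists>l::real. A *v s = l *\<^sub>R s)"
proof (induction k)
  case 0
  have "corthonormal ({} :: (complex^'n) set)" unfolding corthonormal_def by simp
  then show ?case by fastforce
next
  case (Suc k)
  then obtain S where S: "corthonormal S" "card S = k" "\<forall>s\<in>S. \<exists>l::real. A *v s = l *\<^sub>R s" by auto
  then obtain v where v: "v \<notin> S" "corthonormal (insert v S)" "\<exists>l::real. A *v v = l *\<^sub>R v"
    using hermitian_eigenvector_extend[OF herm S(1) S(3)] Suc.prems by auto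
  then have "card (insert v S) = Suc k" using corthonormal_card(1)[OF S(1)] S(2) by simp
  with v S show ?case by (intro exI[of _ "insert v S"]) auto
qed

theorem hermitian_eigen_decomp:
  fixes A :: "complex^'n^'n"
  assumes herm: "hermitian A"
  shows "\<exists>lam u. eigen_decomp A lam u"
proof -
  obtain S where S: "corthonormal S" "card S = CARD('n)" "\<forall>s\<in>S. \<exists>l::real. A *v s = l *\<^sub>R s"
    using hermitian_eigenvectors_card[OF herm, of "CARD('n)"] by auto
  obtain f where f: "bij_betw f (UNIV::'n set) S"
    using finite_same_card_bij[of "UNIV::'n set" S] corthonormal_card(1)[OF S(1)] S(2) by auto
  define lam where "lam i = Re (cinner (f i) (A *v f i))" for i
  have fS: "f i \<in> S" for i using f by (auto simp: bij_betw_def)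
  have Af: "A *v f i = lam i *\<^sub>R f i" for i
  proof -
    obtain l where l: "A *v f i = l *\<^sub>R f i" using S(3) fS[of i] by blast
    have "cinner (f i) (f i) = 1" using S(1) fS unfolding corthonormal_def by auto
    then show ?thesis using l unfolding lam_def by (simp add: cinner_scaleR_right)
  qed
  have orth: "cinner (f i) (f j) = (if i = j then 1 else 0)" for i j
    using S(1) fS bij_betw_imp_inj_on[OF f] unfolding corthonormal_def by (auto simp: inj_eq)
  have "A = (\<Sum>i\<in>UNIV. lam i *\<^sub>R outer (f i))"
  proof (subst matrix_eq, intro allI)
    fix x
    have x: "x = (\<Sum>i\<in>UNIV. cinner (f i) x *s f i)"
      using corthonormal_expansion[OF S(1) S(2), of x]
        sum.reindex_bij_betw[OF f, of "\<lambda>s. cinner s x *s s"] by simp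
    have "A *v x = (\<Sum>i\<in>UNIV. lam i *\<^sub>R (cinner (f i) x *s f i))"
      by (subst x) (simp add: matrix_vector_mult_sum_right matrix_vector_mult_smult_right Af
          vec_eq_iff scaleR_complex mult_ac)
    also have "\<dots> = (\<Sum>i\<in>UNIV. lam i *\<^sub>R outer (f i)) *v x"
      by (simp add: matrix_vector_mult_sum scaleR_matrix_vector_mult outer_matrix_vector)
    finally show "A *v x = (\<Sum>i\<in>UNIV. lam i *\<^sub>R outer (f i)) *v x" .
  qed
  then show ?thesis unfolding eigen_decomp_def using orth by blast
qed

section \<open>Positive and negative parts\<close>

lemma eigen_decomp_apply:
  assumes "eigen_decomp A lam u"
  shows "(\<Sum>i\<in>UNIV. c i *\<^sub>R outer (u i)) *v u j = c j *\<^sub>R u j"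
proof -
  have "(\<Sum>i\<in>UNIV. c i *\<^sub>R outer (u i)) *v u j = (\<Sum>i\<in>UNIV. c i *\<^sub>R (cinner (u i) (u j) *s u i))"
    by (simp add: matrix_vector_mult_sum scaleR_matrix_vector_mult outer_matrix_vector)
  also have "\<dots> = (\<Sum>i\<in>UNIV. if i = j then c j *\<^sub>R u j else 0)"
    using assms unfolding eigen_decomp_def by (intro sum.cong) auto
  finally show ?thesis by simp
qed

lemma eigen_decomp_expansion:
  fixes u :: "'n \<Rightarrow> complex^'n"
  assumes "eigen_decomp A lam u"
  shows "x = (\<Sum>i\<in>UNIV. cinner (u i) x *s u i)"
proof -
  have orth: "cinner (u i) (u j) = (if i = j then 1 else 0)" for i j
    using assms unfolding eigen_decomp_def by blast
  then have inj: "inj u" by (metis injI zero_neq_one)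
  have "corthonormal (range u)" unfolding corthonormal_def using orth by auto
  moreover have "card (range u) = CARD('n)" using inj by (simp add: card_image)
  ultimately have "x = (\<Sum>s\<in>range u. cinner s x *s s)" by (rule corthonormal_expansion)
  also have "\<dots> = (\<Sum>i\<in>UNIV. cinner (u i) x *s u i)" using inj by (simp add: sum.reindex)
  finally show ?thesis .
qed

text \<open>A function of a Hermitian matrix, applied to its eigenvalues, does not depend on the
  chosen eigen-decomposition: eigenvectors of different decompositions with nonzero overlap
  share their eigenvalue.\<close>

lemma eigen_decomp_function_unique:
  fixes A :: "complex^'n^'n"
  assumes herm: "hermitian A" and ed1: "eigen_decomp A lam u" and ed2: "eigen_decomp A mu w"
  shows "(\<Sum>i\<in>UNIV. f (lam i) *\<^sub>R outer (u i)) = (\<Sum>i\<in>UNIV. f (mu i) *\<^sub>R outer (w i))"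
proof -
  have A_u: "A = (\<Sum>i\<in>UNIV. lam i *\<^sub>R outer (u i))" and A_w: "A = (\<Sum>i\<in>UNIV. mu i *\<^sub>R outer (w i))"
    using ed1 ed2 unfolding eigen_decomp_def by blast+
  have same_eigenvalue: "mu j = lam i" if "cinner (w j) (u i) \<noteq> 0" for i j
  proof -
    have "of_real (lam i) * cinner (w j) (u i) = cinner (w j) (A *v u i)"
      by (simp add: A_u eigen_decomp_apply[OF ed1] cinner_scaleR_right)
    also have "\<dots> = cinner (A *v w j) (u i)" by (rule hermitian_cinner_sym[OF herm])
    also have "\<dots> = of_real (mu j) * cinner (w j) (u i)"
      by (simp add: A_w eigen_decomp_apply[OF ed2] cinner_scaleR_left)
    finally show ?thesis using that by simp
  qed
  have F_w_u: "(\<Sum>j\<in>UNIV. f (mu j) *\<^sub>R outer (w j)) *v u i = f (lam i) *\<^sub>R u i" for i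
  proof -
    have "(\<Sum>j\<in>UNIV. f (mu j) *\<^sub>R outer (w j)) *v u i
        = (\<Sum>j\<in>UNIV. f (mu j) *\<^sub>R (cinner (w j) (u i) *s w j))"
      by (simp add: matrix_vector_mult_sum scaleR_matrix_vector_mult outer_matrix_vector)
    also have "\<dots> = f (lam i) *\<^sub>R (\<Sum>j\<in>UNIV. cinner (w j) (u i) *s w j)"
      unfolding scaleR_sum_right
      by (intro sum.cong refl) (metis same_eigenvalue scaleR_zero_right vector_smult_lzero)
    also have "\<dots> = f (lam i) *\<^sub>R u i"
      using eigen_decomp_expansion[OF ed2, of "u i"] by simp
    finally show ?thesis .
  qed
  show ?thesis
  proof (subst matrix_eq, intro allI)
    fix x
    have "M *v x = (\<Sum>i\<in>UNIV. cinner (u i) x *s (M *v u i))" for M :: "complex^'n^'n"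
      by (subst eigen_decomp_expansion[OF ed1, of x])
        (simp add: matrix_vector_mult_sum_right matrix_vector_mult_smult_right)
    then show "(\<Sum>i\<in>UNIV. f (lam i) *\<^sub>R outer (u i)) *v x = (\<Sum>i\<in>UNIV. f (mu i) *\<^sub>R outer (w i)) *v x"
      by (simp only: F_w_u eigen_decomp_apply[OF ed1])
  qed
qed

lemma some_eigen_decomp_filter_sum:
  fixes A :: "complex^'n^'n"
  assumes herm: "hermitian A" and ed: "eigen_decomp A lam u"
  shows "(SOME M. \<exists>lam u. eigen_decomp A lam u \<and> M = (\<Sum>i\<in>{i. P (lam i)}. lam i *\<^sub>R outer (u i)))
    = (\<Sum>i\<in>UNIV. (if P (lam i) then lam i else 0) *\<^sub>R outer (u i))"
proof -
  have filter: "(\<Sum>i\<in>{i. P (lam i)}. lam i *\<^sub>R outer (u i))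
      = (\<Sum>i\<in>UNIV. (if P (lam i) then lam i else 0) *\<^sub>R outer (u i))"
    for lam :: "'n \<Rightarrow> real" and u :: "'n \<Rightarrow> complex^'n"
    using sum.inter_filter[of UNIV "\<lambda>i. lam i *\<^sub>R outer (u i)" "\<lambda>i. P (lam i)"]
    by (simp, intro sum.cong) auto
  obtain lam' u' where ed': "eigen_decomp A lam' u'"
    and some: "(SOME M. \<exists>lam u. eigen_decomp A lam u \<and> M = (\<Sum>i\<in>{i. P (lam i)}. lam i *\<^sub>R outer (u i)))
      = (\<Sum>i\<in>{i. P (lam' i)}. lam' i *\<^sub>R outer (u' i))"
    using someI_ex[of "\<lambda>M. \<exists>lam u. eigen_decomp A lam u \<and>
        M = (\<Sum>i\<in>{i. P (lam i)}. lam i *\<^sub>R outer (u i))"] ed by blast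
  show ?thesis
    unfolding some by (simp only: filter) (rule eigen_decomp_function_unique[OF herm ed' ed])
qed

lemma pos_part_eq:
  "hermitian A \<Longrightarrow> eigen_decomp A lam u
    \<Longrightarrow> pos_part A = (\<Sum>i\<in>UNIV. (if 0 < lam i then lam i else 0) *\<^sub>R outer (u i))"
  unfolding pos_part_def by (rule some_eigen_decomp_filter_sum[of _ _ _ "\<lambda>x. 0 < x"])

lemma neg_part_eq:
  "hermitian A \<Longrightarrow> eigen_decomp A lam u
    \<Longrightarrow> neg_part A = (\<Sum>i\<in>UNIV. (if lam i < 0 then lam i else 0) *\<^sub>R outer (u i))"
  unfolding neg_part_def by (rule some_eigen_decomp_filter_sum[of _ _ _ "\<lambda>x. x < 0"])

theorem pos_neg_part:
  fixes A :: "complex^'n^'n"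
  assumes herm: "hermitian A"
  shows "pos_part A + neg_part A = A" and "psd (pos_part A)" and "psd (- neg_part A)"
proof -
  obtain lam u where ed: "eigen_decomp A lam u" using hermitian_eigen_decomp[OF herm] by blast
  note P = pos_part_eq[OF herm ed] and N = neg_part_eq[OF herm ed]
  have "(if 0 < x then x else 0) + (if x < 0 then x else 0) = x" for x :: real
    by simp
  then have "pos_part A + neg_part A = (\<Sum>i\<in>UNIV. lam i *\<^sub>R outer (u i))"
    unfolding P N by (simp add: sum.distrib[symmetric] scaleR_add_left[symmetric])
  then show "pos_part A + neg_part A = A"
    using ed unfolding eigen_decomp_def by simp
  show "psd (pos_part A)" unfolding P by (rule psd_outer_sum) auto
  have "psd (\<Sum>i\<in>UNIV. (- (if lam i < 0 then lam i else 0)) *\<^sub>R outer (u i))"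
    by (rule psd_outer_sum) auto
  then show "psd (- neg_part A)" by (simp add: N sum_negf[symmetric])
qed

section \<open>Gradients of functions on Hermitian matrices\<close>

lemma linear_Re_trace_mult: "linear (\<lambda>M::complex^'r^'r. Re (trace (G ** M)))"
proof (rule linearI)
  fix M N :: "complex^'r^'r" and t :: real
  show "Re (trace (G ** (M + N))) = Re (trace (G ** M)) + Re (trace (G ** N))"
    by (simp add: matrix_add_ldistrib trace_add)
  have "G ** (t *\<^sub>R M) = t *\<^sub>R (G ** M)"
    by (simp add: matrix_scalar_ac scalar_matrix_assoc)
  then show "Re (trace (G ** (t *\<^sub>R M))) = t *\<^sub>R Re (trace (G ** M))"
    by (simp add: trace_scaleR)
qed

lemma gradient_line_derivative:
  assumes grad: "is_gradient g W G" and "hermitian W" "hermitian M"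
  shows "((\<lambda>t. g (W + t *\<^sub>R M)) has_real_derivative Re (trace (G ** M))) (at 0)"
proof -
  have line: "((\<lambda>t. W + t *\<^sub>R M) has_derivative (\<lambda>t. t *\<^sub>R M)) (at 0)"
    by (auto intro!: derivative_eq_intros)
  have "range (\<lambda>t. W + t *\<^sub>R M) \<subseteq> herm_set"
    unfolding herm_set_def using assms(2,3) by (auto intro!: hermitian_add hermitian_scaleR)
  then have "(g has_derivative (\<lambda>D. Re (trace (G ** D)))) (at (W + 0 *\<^sub>R M) within range (\<lambda>t. W + t *\<^sub>R M))"
    using grad unfolding is_gradient_def by (auto intro: has_derivative_subset)
  from diff_chain_within[OF line this]
  show ?thesis
    unfolding has_field_derivative_def comp_def
    by (simp add: linear_scale[OF linear_Re_trace_mult] mult_commute_abs)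
qed

lemma gradient_nonpos_if_decreasing:
  assumes grad: "is_gradient g W G" and "hermitian W" "hermitian M"
    and decr: "\<And>t. t > 0 \<Longrightarrow> g (W + t *\<^sub>R M) \<le> g W"
  shows "Re (trace (G ** M)) \<le> 0"
proof (rule ccontr)
  assume "\<not> Re (trace (G ** M)) \<le> 0"
  then obtain d where "d > 0" and incr: "\<And>h. h > 0 \<Longrightarrow> h < d \<Longrightarrow> g (W + 0 *\<^sub>R M) < g (W + (0 + h) *\<^sub>R M)"
    using DERIV_pos_inc_right[OF gradient_line_derivative[OF assms(1-3)]] by force
  then have "g W < g (W + (d / 2) *\<^sub>R M)" using incr[of "d / 2"] by simp
  with decr[of "d / 2"] \<open>d > 0\<close> show False by simp
qed

lemma convex_on_herm_gradient_ineq: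
  assumes cvx: "convex_on herm_set g" and grad: "is_gradient g W G"
    and hW: "hermitian W" and hV: "hermitian V"
  shows "g W + Re (trace (G ** (V - W))) \<le> g V"
proof -
  define phi where "phi t = g (W + t *\<^sub>R (V - W))" for t
  have hD: "hermitian (V - W)" using hV hW by (rule hermitian_diff)
  have in_herm: "W + t *\<^sub>R (V - W) \<in> herm_set" for t
    unfolding herm_set_def using hW hD by (auto intro!: hermitian_add hermitian_scaleR)
  have "convex_on UNIV phi"
  proof (rule convex_onI)
    fix t x y :: real assume "t > 0" "t < 1"
    have "W + ((1 - t) *\<^sub>R x + t *\<^sub>R y) *\<^sub>R (V - W)
        = (1 - t) *\<^sub>R (W + x *\<^sub>R (V - W)) + t *\<^sub>R (W + y *\<^sub>R (V - W))"
      by (simp add: algebra_simps)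
    then show "phi ((1 - t) *\<^sub>R x + t *\<^sub>R y) \<le> (1 - t) * phi x + t * phi y"
      unfolding phi_def
      using convex_onD[OF cvx, of t "W + x *\<^sub>R (V - W)" "W + y *\<^sub>R (V - W)"] \<open>t > 0\<close> \<open>t < 1\<close> in_herm
      by simp
  qed simp
  moreover have "(phi has_real_derivative Re (trace (G ** (V - W)))) (at 0)"
    unfolding phi_def by (rule gradient_line_derivative[OF grad hW hD])
  ultimately have "Re (trace (G ** (V - W))) * (1 - 0) \<le> phi 1 - phi 0"
    using convex_on_imp_above_tangent[of UNIV phi 0 1] by simp
  then show ?thesis unfolding phi_def by simp
qed

lemma gradient_chain_sesq:
  assumes grad: "is_gradient g (sesq A X0 X0) G" and herm: "hermitian A"
  shows "((\<lambda>X. g (sesq A X X)) has_derivative (\<lambda>H. Re (trace (G ** (sesq A X0 H + sesq A H X0))))) (at X0)"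
proof -
  have "bounded_bilinear (sesq A)"
    using bilinear_sesq by (simp add: bilinear_conv_bounded_bilinear)
  from bounded_bilinear.FDERIV[OF this has_derivative_ident has_derivative_ident]
  have inner: "((\<lambda>X. sesq A X X) has_derivative (\<lambda>H. sesq A X0 H + sesq A H X0)) (at X0)" .
  have "range (\<lambda>X. sesq A X X) \<subseteq> herm_set"
    unfolding herm_set_def using hermitian_sesq[OF herm] by auto
  then have "(g has_derivative (\<lambda>D. Re (trace (G ** D)))) (at (sesq A X0 X0) within range (\<lambda>X. sesq A X X))"
    using grad unfolding is_gradient_def by (auto intro: has_derivative_subset)
  from diff_chain_within[OF inner this] show ?thesis by (simp add: comp_def)
qed

section \<open>Quadratic functions\<close>

lemma concave_on_quadratic:
  assumes bil: "bilinear f" and nonpos: "\<And>x. f x x \<le> 0" and lin: "linear l"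
  shows "concave_on UNIV (\<lambda>x. f x x + l x + c)"
proof -
  have "concave_on UNIV (\<lambda>x. f x x)"
    unfolding concave_on_iff
  proof (intro conjI ballI allI impI convex_UNIV)
    fix x y and u v :: real assume "u \<ge> 0" "v \<ge> 0" "u + v = 1"
    have "f (u *\<^sub>R x + v *\<^sub>R y) (u *\<^sub>R x + v *\<^sub>R y)
        = u * u * f x x + u * v * f x y + u * v * f y x + v * v * f y y"
      by (simp add: bilinear_ladd[OF bil] bilinear_radd[OF bil] bilinear_lmul[OF bil]
          bilinear_rmul[OF bil] algebra_simps)
    moreover have diff: "f (x - y) (x - y) = f x x - f x y - f y x + f y y"
      by (simp add: bilinear_lsub[OF bil] bilinear_rsub[OF bil])
    moreover have "u * f x x + v * f y y - (u * u * f x x + u * v * f x y + u * v * f y x + v * v * f y y)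
        = u * v * (f x x - f x y - f y x + f y y)"
      using \<open>u + v = 1\<close> by algebra
    moreover have "u * v * (f x x - f x y - f y x + f y y) \<le> 0"
      using nonpos[of "x - y"] \<open>u \<ge> 0\<close> \<open>v \<ge> 0\<close> diff by (simp add: mult_nonneg_nonpos)
    ultimately show "u * f x x + v * f y y \<le> f (u *\<^sub>R x + v *\<^sub>R y) (u *\<^sub>R x + v *\<^sub>R y)"
      by linarith
  qed
  moreover have "concave_on UNIV l"
    unfolding concave_on_iff by (simp add: linear_add[OF lin] linear_scale[OF lin])
  ultimately show ?thesis by (intro concave_on_add concave_on_const[THEN iffD2] convex_UNIV)
qed

lemma quadratic_has_derivative:
  fixes f :: "'a::euclidean_space \<Rightarrow> 'a \<Rightarrow> real"
  assumes bil: "bilinear f" and lin: "linear l"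
  shows "((\<lambda>x. f x x + l x + c) has_derivative (\<lambda>h. f x h + f h x + l h)) (at x)"
proof -
  have "bounded_bilinear f" using bil by (simp add: bilinear_conv_bounded_bilinear)
  from bounded_bilinear.FDERIV[OF this has_derivative_ident has_derivative_ident]
  have quad: "((\<lambda>x. f x x) has_derivative (\<lambda>h. f x h + f h x)) (at x)" .
  have "bounded_linear l" using lin linear_conv_bounded_linear by blast
  then have "(l has_derivative l) (at x)" by (rule bounded_linear_imp_has_derivative)
  with quad show ?thesis by (intro has_derivative_add_const has_derivative_add)
qed

lemma has_derivative_eq_if_touching:
  fixes f h :: "'a::real_normed_vector \<Rightarrow> real"
  assumes "(f has_derivative F) (at x)" "(h has_derivative H) (at x)"
    and "\<And>y. f y \<le> h y" "f x = h x"
  shows "F = H"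
proof -
  have "((\<lambda>y. h y - f y) has_derivative (\<lambda>v. H v - F v)) (at x)"
    by (rule has_derivative_diff[OF assms(2) assms(1)])
  moreover have "eventually (\<lambda>y. h x - f x \<le> h y - f y) (at x)"
    using assms(3,4) by (simp add: always_eventually)
  ultimately have "(\<lambda>v. H v - F v) = (\<lambda>v. 0)" by (rule has_derivative_local_min)
  then show ?thesis by (simp add: fun_eq_iff)
qed

section \<open>The concave minorant\<close>

locale concave_minorant =
  fixes g :: "complex^'r^'r \<Rightarrow> real" and G :: "complex^'r^'r"
    and A R Q :: "complex^'n^'n" and X0 :: "complex^'r^'n"
  assumes convex: "convex_on herm_set g"
    and gradient: "is_gradient g (sesq A X0 X0) G"
    and split: "A = R + Q"
    and hermitian_R: "hermitian R" and hermitian_Q: "hermitian Q"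
    and increasing_Q: "\<And>V X. hermitian V \<Longrightarrow> g V \<le> g (V + sesq Q X X)"
    and decreasing_R: "\<And>V X. hermitian V \<Longrightarrow> g (V + sesq R X X) \<le> g V"
begin

abbreviation W0 :: "complex^'r^'r" where
  "W0 \<equiv> sesq A X0 X0"

definition L :: "complex^'r^'n \<Rightarrow> complex^'r^'r" where
  "L X = sesq R X X + sesq Q X X0 + sesq Q X0 X - sesq Q X0 X0"

definition minorant :: "complex^'r^'n \<Rightarrow> real" where
  "minorant X = g W0 + Re (trace (G ** (L X - W0)))"

lemma hermitian_A: "hermitian A"
  unfolding split using hermitian_R hermitian_Q by (rule hermitian_add)

lemma hermitian_G: "hermitian G"
  using gradient unfolding is_gradient_def by blast

lemma hermitian_L: "hermitian (L X)"
proof -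
  have "L X = sesq R X X + (sesq Q X X0 + sesq Q X0 X) - sesq Q X0 X0"
    unfolding L_def by (simp add: add.assoc)
  then show ?thesis
    by (simp add: hermitian_add hermitian_diff hermitian_sesq hermitian_sesq_sym hermitian_R hermitian_Q)
qed

lemma L_X0: "L X0 = W0"
  unfolding L_def split by (simp add: sesq_add_matrix)

lemma sesq_eq_L_plus_gap: "sesq A X X = L X + sesq Q (X - X0) (X - X0)"
  unfolding L_def split
  by (simp add: sesq_add_matrix bilinear_lsub[OF bilinear_sesq] bilinear_rsub[OF bilinear_sesq])

lemma minorant_le: "minorant X \<le> g (sesq A X X)"
proof -
  have "minorant X \<le> g (L X)"
    unfolding minorant_def
    by (rule convex_on_herm_gradient_ineq[OF convex gradient hermitian_sesq[OF hermitian_A] hermitian_L])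
  also have "\<dots> \<le> g (sesq A X X)"
    unfolding sesq_eq_L_plus_gap by (rule increasing_Q[OF hermitian_L])
  finally show ?thesis .
qed

lemma minorant_X0: "minorant X0 = g W0"
  unfolding minorant_def L_X0 by (simp add: trace_def)

lemma trace_minorant: "trace (ctrans (L X) ** G) + of_real (g W0) - trace (W0 ** G) = of_real (minorant X)"
proof -
  have "Im (trace (L X ** G)) = 0" "Im (trace (W0 ** G)) = 0"
    using Im_trace_hermitian_mult hermitian_L hermitian_sesq[OF hermitian_A] hermitian_G by auto
  moreover have "ctrans (L X) = L X" using hermitian_L unfolding hermitian_def .
  ultimately show ?thesis
    unfolding minorant_def
    by (simp add: complex_eq_iff matrix_diff_ldistrib trace_sub trace_mul_sym[of _ G])
qed

lemma Re_trace_sesq_R_nonpos: "Re (trace (G ** sesq R D D)) \<le> 0"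
proof (rule gradient_nonpos_if_decreasing[OF gradient hermitian_sesq[OF hermitian_A]
      hermitian_sesq[OF hermitian_R]])
  fix t :: real assume "t > 0"
  then have "t *\<^sub>R sesq R D D = sesq R (sqrt t *\<^sub>R D) (sqrt t *\<^sub>R D)"
    by (simp add: bilinear_lmul[OF bilinear_sesq] bilinear_rmul[OF bilinear_sesq])
  then show "g (W0 + t *\<^sub>R sesq R D D) \<le> g W0"
    using decreasing_R[OF hermitian_sesq[OF hermitian_A]] by simp
qed

definition curvature :: "complex^'r^'n \<Rightarrow> complex^'r^'n \<Rightarrow> real" where
  "curvature X Y = Re (trace (G ** sesq R X Y))"

definition slope :: "complex^'r^'n \<Rightarrow> real" where
  "slope X = Re (trace (G ** (sesq Q X X0 + sesq Q X0 X)))"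

lemma bilinear_curvature: "bilinear curvature"
proof -
  have "linear (sesq R X)" "linear (\<lambda>X. sesq R X Y)" for X Y
    using bilinear_sesq unfolding bilinear_def by auto
  then have "linear ((\<lambda>M. Re (trace (G ** M))) \<circ> sesq R X)"
    and "linear ((\<lambda>M. Re (trace (G ** M))) \<circ> (\<lambda>X. sesq R X Y))" for X Y
    by (auto intro: linear_compose linear_Re_trace_mult)
  then show ?thesis by (simp add: bilinear_def curvature_def comp_def)
qed

lemma linear_slope: "linear slope"
proof (rule linearI)
  note sesq = bilinear_sesq[of Q] and tr = linear_Re_trace_mult[of G]
  show "slope (X + Y) = slope X + slope Y" for X Y
    unfolding slope_def
    by (simp add: bilinear_ladd[OF sesq] bilinear_radd[OF sesq] linear_add[OF tr] algebra_simps)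
  show "slope (t *\<^sub>R X) = t *\<^sub>R slope X" for t X
    unfolding slope_def
    by (simp add: bilinear_lmul[OF sesq] bilinear_rmul[OF sesq] linear_scale[OF tr]
        flip: scaleR_add_right)
qed

lemma minorant_expand:
  "minorant = (\<lambda>X. curvature X X + slope X + (g W0 - Re (trace (G ** (sesq Q X0 X0 + W0)))))"
proof
  fix X
  have "L X - W0 = sesq R X X + (sesq Q X X0 + sesq Q X0 X) - (sesq Q X0 X0 + W0)"
    unfolding L_def by (simp add: algebra_simps)
  then show "minorant X = curvature X X + slope X + (g W0 - Re (trace (G ** (sesq Q X0 X0 + W0))))"
    unfolding minorant_def curvature_def slope_def
    by (simp add: linear_add[OF linear_Re_trace_mult] linear_diff[OF linear_Re_trace_mult])
qed

lemma concave_on_minorant: "concave_on UNIV minorant"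
  unfolding minorant_expand
  by (rule concave_on_quadratic[OF bilinear_curvature _ linear_slope])
    (simp add: curvature_def Re_trace_sesq_R_nonpos)

lemma minorant_same_derivative:
  "\<exists>D. (minorant has_derivative D) (at X0) \<and> ((\<lambda>X. g (sesq A X X)) has_derivative D) (at X0)"
proof -
  have minorant: "(minorant has_derivative (\<lambda>H. curvature X0 H + curvature H X0 + slope H)) (at X0)"
    unfolding minorant_expand by (rule quadratic_has_derivative[OF bilinear_curvature linear_slope])
  note g = gradient_chain_sesq[OF gradient hermitian_A]
  show ?thesis
    using minorant g has_derivative_eq_if_touching[OF minorant g minorant_le minorant_X0] by auto
qed

end

lemma monotone_along_parts:
  fixes A :: "complex^'n^'n" and g :: "complex^'r^'r \<Rightarrow> real"
  assumes herm: "hermitian A" and mono: "if mnd then MND g else MNI g" and V: "hermitian V"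
  shows "g V \<le> g (V + sesq (if mnd then pos_part A else neg_part A) X X)"
    and "g (V + sesq (if mnd then neg_part A else pos_part A) X X) \<le> g V"
proof -
  have P: "psd (sesq (pos_part A) X X)" and N: "psd (- sesq (neg_part A) X X)"
    using psd_sesq pos_neg_part[OF herm] sesq_uminus_matrix by metis+
  then have hP: "hermitian (V + sesq (pos_part A) X X)" and hN: "hermitian (V + sesq (neg_part A) X X)"
    using V unfolding psd_def by (auto simp: hermitian_uminus_iff intro: hermitian_add)
  show "g V \<le> g (V + sesq (if mnd then pos_part A else neg_part A) X X)"
    using mono V P N hP hN unfolding MND_def MNI_def by (cases mnd) auto
  show "g (V + sesq (if mnd then neg_part A else pos_part A) X X) \<le> g V"
    using mono V P N hP hN unfolding MND_def MNI_def by (cases mnd) auto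
qed

lemma concave_minorant_spectral_parts:
  fixes A :: "complex^'n^'n" and g :: "complex^'r^'r \<Rightarrow> real"
  assumes herm: "hermitian A" and G: "in_G g" and mono: "if mnd then MND g else MNI g"
  shows "concave_minorant g (grad g (sesq A X0 X0)) A
    (if mnd then neg_part A else pos_part A) (if mnd then pos_part A else neg_part A) X0"
proof unfold_locales
  have "\<exists>G. is_gradient g (sesq A X0 X0) G"
    using herm G hermitian_sesq unfolding in_G_def herm_set_def by blast
  then show "is_gradient g (sesq A X0 X0) (grad g (sesq A X0 X0))"
    unfolding grad_def by (rule someI_ex)
  have "hermitian (pos_part A)" "hermitian (neg_part A)"
    using pos_neg_part(2,3)[OF herm] unfolding psd_def by (auto simp: hermitian_uminus_iff)
  then show "hermitian (if mnd then neg_part A else pos_part A)"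
    and "hermitian (if mnd then pos_part A else neg_part A)" by auto
  show "A = (if mnd then neg_part A else pos_part A) + (if mnd then pos_part A else neg_part A)"
    using pos_neg_part(1)[OF herm] by (auto simp: add.commute)
qed (use G monotone_along_parts[OF herm mono] in \<open>auto simp: in_G_def\<close>)

theorem theorem1:
  fixes A :: "complex^'n^'n" and g :: "complex^'r^'r \<Rightarrow> real"
    and X0 :: "complex^'r^'n" and mnd :: bool
  assumes "hermitian A"
    and "in_G g"
    and "if mnd then MND g else MNI g"
  shows "(\<forall>X. Im (lfun mnd g A X0 X) = 0) \<and> concave_on UNIV (\<lambda>X. Re (lfun mnd g A X0 X))
    \<and> (\<forall>X. Re (lfun mnd g A X0 X) \<le> g (ctrans X ** A ** X))
    \<and> lfun mnd g A X0 X0 = complex_of_real (g (ctrans X0 ** A ** X0))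
    \<and> (\<exists>D. ((\<lambda>X. Re (lfun mnd g A X0 X)) has_derivative D) (at X0) \<and>
             ((\<lambda>X. g (ctrans X ** A ** X)) has_derivative D) (at X0))"
proof -
  define R where "R = (if mnd then neg_part A else pos_part A)"
  define Q where "Q = (if mnd then pos_part A else neg_part A)"
  interpret concave_minorant g "grad g (sesq A X0 X0)" A R Q X0
    unfolding R_def Q_def by (rule concave_minorant_spectral_parts[OF assms])
  have "Lmat mnd A X0 X = L X" for X
    unfolding Lmat_def Let_def R_def[symmetric] Q_def[symmetric] L_def sesq_def ..
  then have lfun: "lfun mnd g A X0 = (\<lambda>X. complex_of_real (minorant X))"
    using trace_minorant unfolding lfun_def Let_def sesq_def by (simp add: fun_eq_iff)
  show ?thesis
    using concave_on_minorant minorant_le minorant_X0 minorant_same_derivative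
    unfolding lfun sesq_def by simp
qed

end
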